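(* Let $\varepsilon>0$ and let $\mathcal{A}\subseteq\mathcal{Z}$ with $z^\star\in\mathcal{A}$ be such that $\Delta_z:=(z^\star-z)^\top\theta^\star\le4\varepsilon$ for every $z\in\mathcal{A}\setminus\{z^\star\}$. Then $$\mathcal{V}^\star_{\mathrm{lin}}(\mathcal{A}:\mathcal{X}-x_1)\le 64\,\boldsymbol\tau^\star_{\mathrm{lin}}(\mathcal{Z}:\mathcal{X}-x_1)\,\varepsilon^2.$$ Consequently, if $\mathbf q\in\Delta^{(K)}$ is arbitrary and $\mathbf p=\tfrac12(\mathbf p_{\mathrm{xor}}(\mathcal{A})+\mathbf q)$, then $\mathcal{V}_{\mathrm{cov}}(\mathcal{A}:\mathcal{X},\mathbf p)\le 512\,\boldsymbol\tau^\star_{\mathrm{lin}}(\mathcal{Z}:\mathcal{X}-x_1)\,\varepsilon^2$.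
   Context: $\mathcal{X}=\{x_1,\dots,x_K\}\subset\mathbb{R}^d$, $\mathcal{Z}\subset\mathbb{R}^d$ finite, $\theta^\star\in\mathbb{R}^d$, $z^\star$ the unique maximizer of $z^\top\theta^\star$ over $\mathcal{Z}$. $\Delta^{(K)}$ is the probability simplex on $[K]$. For $\mathbf p\in\Delta^{(K)}$: $\bar x_{\mathbf p}:=\sum_ip_ix_i$, $\mathbf\Sigma_{\mathrm{cov},\mathbf p}:=\sum_ip_i(x_i-\bar x_{\mathbf p})(x_i-\bar x_{\mathbf p})^\top$, $\mathbf\Sigma_{-1,\mathbf p}:=\sum_ip_i(x_i-x_1)(x_i-x_1)^\top$. For PSD $\mathbf A$, $\|y\|_{\mathbf A^{-1}}:=\lim_{\lambda\to0^+}\sqrt{y^\top(\mathbf A+\lambda\mathbf I_d)^{-1}y}$ (possibly $+\infty$). $\boldsymbol\tau^\star_{\mathrm{lin}}(\mathcal{Z}:\mathcal{X}-x_1):=\min_{\mathbf p\in\Delta^{(K)}}\max_{z\in\mathcal{Z}\setminus\{z^\star\}}\|z^\star-z\|^2_{\mathbf\Sigma_{-1,\mathbf p}^{-1}}/((z^\star-z)^\top\theta^\star)^2$. $\mathcal{V}_{\mathrm{cov}}(\mathcal{A}:\mathcal{X},\mathbf p):=\max_{u,u'\in\mathcal{A}}\|u-u'\|^2_{\mathbf\Sigma_{\mathrm{cov},\mathbf p}^{-1}}$; $\mathcal{V}^\star_{\mathrm{lin}}(\mathcal{A}:\mathcal{X}-x_1):=\min_{\mathbf p\in\Delta^{(K)}}\max_{u,u'\in\mathcal{A}}\|u-u'\|^2_{\mathbf\Sigma_{-1,\mathbf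 p}^{-1}}$. $\mathbf p_{\mathrm{xor}}(\mathcal{A}):=(\tfrac12,\tfrac12\tilde p_2,\dots,\tfrac12\tilde p_K)$, where $\tilde{\mathbf p}\in\Delta^{(K)}$ is a minimizer in the definition of $\mathcal{V}^\star_{\mathrm{lin}}(\mathcal{A}:\mathcal{X}-x_1)$ with $\tilde p_1=0$. *)

theory Defs
  imports "HOL-Analysis.Analysis"
begin

text \<open>Vectors in R^d are \<open>real^'d\<close>; d x d matrices are \<open>real^'d^'d\<close>.
  The arms x_1..x_K are \<open>x :: nat \<Rightarrow> real^'d\<close> indexed by {1..K}.\<close>

definition outer :: "real^'d \<Rightarrow> real^'d \<Rightarrow> real^'d^'d" where
  "outer u v = (\<chi> i j. u $ i * v $ j)"

text \<open>Squared generalized inverse norm: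
  ||y||^2_{A^{-1}} = lim_{lambda -> 0+} y^T (A + lambda I)^{-1} y, in extended reals.\<close>
definition inv_normsq :: "real^'d^'d \<Rightarrow> real^'d \<Rightarrow> ereal" where
  "inv_normsq A y =
     Lim (at_right 0) (\<lambda>lam::real. ereal (y \<bullet> (matrix_inv (A + lam *\<^sub>R mat 1) *v y)))"

definition prob_simplex :: "nat \<Rightarrow> (nat \<Rightarrow> real) set" where
  "prob_simplex K = {p. (\<forall>i\<in>{1..K}. 0 \<le> p i) \<and> (\<Sum>i\<in>{1..K}. p i) = 1}"

definition xbar :: "nat \<Rightarrow> (nat \<Rightarrow> real^'d) \<Rightarrow> (nat \<Rightarrow> real) \<Rightarrow> real^'d" where
  "xbar K x p = (\<Sum>i\<in>{1..K}. p i *\<^sub>R x i)"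

definition Sigma_cov :: "nat \<Rightarrow> (nat \<Rightarrow> real^'d) \<Rightarrow> (nat \<Rightarrow> real) \<Rightarrow> real^'d^'d" where
  "Sigma_cov K x p = (\<Sum>i\<in>{1..K}. p i *\<^sub>R outer (x i - xbar K x p) (x i - xbar K x p))"

definition Sigma_m1 :: "nat \<Rightarrow> (nat \<Rightarrow> real^'d) \<Rightarrow> (nat \<Rightarrow> real) \<Rightarrow> real^'d^'d" where
  "Sigma_m1 K x p = (\<Sum>i\<in>{1..K}. p i *\<^sub>R outer (x i - x 1) (x i - x 1))"

text \<open>Maximum of a family of nonnegative extended reals; the maximum over an
  empty index set is taken to be 0 (convention).\<close>
definition maxnn :: "ereal set \<Rightarrow> ereal" where
  "maxnn S = Sup (insert 0 S)"

definition tau_lin :: "nat \<Rightarrow> (nat \<Rightarrow> real^'d) \<Rightarrow> (real^'d) set \<Rightarrow> real^'d \<Rightarrow> real^'d \<Rightarrow> ereal" where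
  "tau_lin K x Z zs th =
     (INF p\<in>prob_simplex K. maxnn ((\<lambda>z. inv_normsq (Sigma_m1 K x p) (zs - z)
                                  / ereal (((zs - z) \<bullet> th)\<^sup>2)) ` (Z - {zs})))"

definition V_cov :: "nat \<Rightarrow> (nat \<Rightarrow> real^'d) \<Rightarrow> (real^'d) set \<Rightarrow> (nat \<Rightarrow> real) \<Rightarrow> ereal" where
  "V_cov K x A p = maxnn ((\<lambda>(u,u'). inv_normsq (Sigma_cov K x p) (u - u')) ` (A \<times> A))"

definition V_lin_obj :: "nat \<Rightarrow> (nat \<Rightarrow> real^'d) \<Rightarrow> (real^'d) set \<Rightarrow> (nat \<Rightarrow> real) \<Rightarrow> ereal" where
  "V_lin_obj K x A p = maxnn ((\<lambda>(u,u'). inv_normsq (Sigma_m1 K x p) (u - u')) ` (A \<times> A))"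

definition V_lin :: "nat \<Rightarrow> (nat \<Rightarrow> real^'d) \<Rightarrow> (real^'d) set \<Rightarrow> ereal" where
  "V_lin K x A = (INF p\<in>prob_simplex K. V_lin_obj K x A p)"

text \<open>p_xor built from a minimizer ptilde (with ptilde 1 = 0).\<close>
definition p_xor :: "(nat \<Rightarrow> real) \<Rightarrow> nat \<Rightarrow> real" where
  "p_xor pt i = (if i = 1 then 1/2 else pt i / 2)"

end

theory Submission
  imports Defs
begin

text \<open>For positive semidefinite \<open>S\<close>, singular or not, the squared generalised inverse norm
  of \<open>y\<close> equals \<open>sup\<^sub>v (2 v\<bullet>y - v\<bullet>S v)\<close>. This gives
  \<open>\<parallel>u - u'\<parallel>\<^sup>2 \<le> 2\<parallel>z\<^sup>\<star> - u\<parallel>\<^sup>2 + 2\<parallel>z\<^sup>\<star> - u'\<parallel>\<^sup>2\<close>, and for \<open>z \<in> A\<close> each \<open>\<parallel>z\<^sup>\<star> - z\<parallel>\<^sup>2\<close> is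
  at most \<open>\<Delta>\<^sub>z\<^sup>2 \<le> 16\<epsilon>\<^sup>2\<close> times the objective of \<open>\<tau>\<^sup>\<star>\<close>. So for every design the diameter
  of \<open>A\<close> is at most \<open>64\<epsilon>\<^sup>2\<close> times that objective, and one takes infima.
  For the second claim, \<open>p_xor\<close> puts mass \<open>1/2\<close> on \<open>x\<^sub>1\<close>, so the matrix anchored at \<open>x\<^sub>1\<close>
  is at most \<open>8\<close> times the covariance in the Loewner order, and the variational formula
  turns this into \<open>V_cov \<le> 8 V_lin\<close>.\<close>

definition psd_sym :: "real^'n^'n \<Rightarrow> bool" where
  "psd_sym S \<longleftrightarrow> (\<forall>v w. v \<bullet> (S *v w) = w \<bullet> (S *v v)) \<and> (\<forall>v. 0 \<le> v \<bullet> (S *v v))"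

lemma psd_sym_add_scaled_id:
  assumes "psd_sym S" "0 \<le> lam"
  shows "psd_sym (S + lam *\<^sub>R mat 1)"
  using assms unfolding psd_sym_def
  by (simp add: matrix_vector_mult_add_rdistrib scaleR_matrix_vector_assoc[symmetric]
      inner_add_right inner_commute add_nonneg_nonneg)

lemma outer_self_mult_vec: "outer u u *v w = (u \<bullet> w) *\<^sub>R u"
  by (simp add: vec_eq_iff matrix_vector_mult_def outer_def inner_vec_def sum_distrib_left
      mult.commute mult.left_commute)

lemma inner_outer_sum_mult_vec:
  assumes "finite I"
  shows "v \<bullet> ((\<Sum>i\<in>I. c i *\<^sub>R outer (u i) (u i)) *v w) = (\<Sum>i\<in>I. c i * (u i \<bullet> v) * (u i \<bullet> w))"
  using assms
proof (induction I rule: finite_induct)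
  case empty
  then show ?case by simp
next
  case (insert a F)
  then show ?case
    by (simp add: matrix_vector_mult_add_rdistrib scaleR_matrix_vector_assoc[symmetric]
        outer_self_mult_vec inner_add_right inner_commute mult_ac)
qed

lemma psd_sym_outer_sum:
  assumes "finite I" "\<forall>i\<in>I. 0 \<le> c i"
  shows "psd_sym (\<Sum>i\<in>I. c i *\<^sub>R outer (u i) (u i))"
  unfolding psd_sym_def inner_outer_sum_mult_vec[OF assms(1)]
  using assms(2) by (auto simp: mult_ac intro: sum_nonneg)

lemma inner_regularized_mult_vec:
  fixes S :: "real^'n^'n"
  shows "v \<bullet> ((S + lam *\<^sub>R mat 1) *v v) = v \<bullet> (S *v v) + lam * (v \<bullet> v)"
  using scaleR_matrix_vector_assoc[of lam "mat 1" v, symmetric]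
  by (simp add: matrix_vector_mult_add_rdistrib inner_add_right)

lemma psd_sym_regularized_right_inverse:
  assumes "psd_sym S" "0 < lam"
  shows "(S + lam *\<^sub>R mat 1) ** matrix_inv (S + lam *\<^sub>R mat 1) = mat 1"
proof -
  let ?M = "S + lam *\<^sub>R mat 1"
  have "v = 0" if "?M *v v = 0" for v
  proof -
    have "v \<bullet> (S *v v) + lam * (v \<bullet> v) = 0"
      using that inner_regularized_mult_vec[of v S lam] by simp
    moreover have "0 \<le> v \<bullet> (S *v v)" using assms(1) unfolding psd_sym_def by blast
    ultimately have "v \<bullet> v = 0"
      using assms(2) by (smt (verit) inner_ge_zero mult_pos_pos)
    then show "v = 0" by simp
  qed
  then have "invertible ?M"
    using matrix_left_invertible_ker invertible_left_inverse by blast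
  then show ?thesis
    unfolding invertible_def matrix_inv_def by (rule someI2_ex) blast
qed

lemma psd_sym_quad_le_solution:
  assumes "psd_sym M" and "M *v w = y"
  shows "2 * (v \<bullet> y) - v \<bullet> (M *v v) \<le> y \<bullet> w"
proof -
  have "0 \<le> (v - w) \<bullet> (M *v (v - w))" using assms(1) unfolding psd_sym_def by blast
  also have "\<dots> = v \<bullet> (M *v v) - v \<bullet> (M *v w) - w \<bullet> (M *v v) + w \<bullet> (M *v w)"
    by (simp add: matrix_vector_mult_diff_distrib inner_diff_left inner_diff_right)
  also have "\<dots> = v \<bullet> (M *v v) - 2 * (v \<bullet> y) + y \<bullet> w"
    using assms unfolding psd_sym_def by (simp add: inner_commute)
  finally show ?thesis by simp
qed

lemma tendsto_SUP_of_penalized_bounds: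
  fixes F :: "real \<Rightarrow> real" and g c :: "'a \<Rightarrow> real"
  assumes lower: "\<And>lam v. 0 < lam \<Longrightarrow> g v - lam * c v \<le> F lam"
    and upper: "\<And>lam. 0 < lam \<Longrightarrow> ereal (F lam) \<le> (SUP v. ereal (g v))"
    and c: "\<And>v. 0 \<le> c v"
  shows "((\<lambda>lam. ereal (F lam)) \<longlongrightarrow> (SUP v. ereal (g v))) (at_right 0)"
proof (rule order_tendstoI)
  fix a assume "a < (SUP v. ereal (g v))"
  then obtain v where av: "a < ereal (g v)" by (auto simp: less_SUP_iff)
  show "\<forall>\<^sub>F lam in at_right 0. a < ereal (F lam)"
  proof (cases a)
    case (real r)
    define d where "d = g v - r"
    have "0 < d" using av real d_def by simp
    then have "\<forall>\<^sub>F lam in at_right 0. lam \<in> {0<..<d / (c v + 1)}"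
      using c by (intro eventually_at_right_real) (simp add: add_nonneg_pos)
    then show ?thesis
    proof (rule eventually_mono)
      fix lam assume "lam \<in> {0<..<d / (c v + 1)}"
      then have lam: "0 < lam" "lam * (c v + 1) < d"
        using c by (auto simp: less_divide_eq add_nonneg_pos)
      then have "r < g v - lam * c v" unfolding d_def by (simp add: distrib_left)
      also have "\<dots> \<le> F lam" using lower[OF lam(1)] .
      finally show "a < ereal (F lam)" using real by simp
    qed
  qed (use av in simp_all)
next
  fix a assume "(SUP v. ereal (g v)) < a"
  then show "\<forall>\<^sub>F lam in at_right 0. ereal (F lam) < a"
    using upper by (intro eventually_mono[OF eventually_at_right_less]) (auto intro: le_less_trans)
qed

text \<open>The limit in \<open>inv_normsq\<close> is squeezed: the regularised value is at most the supremum and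
  at least the supremum of the objective penalised by \<open>lam \<parallel>v\<parallel>\<^sup>2\<close>.\<close>
lemma inv_normsq_eq_SUP:
  assumes S: "psd_sym S"
  shows "inv_normsq S y = (SUP v. ereal (2 * (v \<bullet> y) - v \<bullet> (S *v v)))"
proof -
  define F where "F lam = y \<bullet> (matrix_inv (S + lam *\<^sub>R mat 1) *v y)" for lam
  have solves: "(S + lam *\<^sub>R mat 1) *v (matrix_inv (S + lam *\<^sub>R mat 1) *v y) = y"
    if "0 < lam" for lam
    using psd_sym_regularized_right_inverse[OF S that] by (simp add: matrix_vector_mul_assoc)
  have "((\<lambda>lam. ereal (F lam)) \<longlongrightarrow> (SUP v. ereal (2 * (v \<bullet> y) - v \<bullet> (S *v v)))) (at_right 0)"
  proof (rule tendsto_SUP_of_penalized_bounds)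
    fix lam :: real and v :: "real^'a" assume "0 < lam"
    show "2 * (v \<bullet> y) - v \<bullet> (S *v v) - lam * (v \<bullet> v) \<le> F lam"
      using psd_sym_quad_le_solution[OF psd_sym_add_scaled_id[OF S] solves] \<open>0 < lam\<close>
      unfolding F_def inner_regularized_mult_vec by (simp add: algebra_simps)
  next
    fix lam :: real assume "0 < lam"
    define w where "w = matrix_inv (S + lam *\<^sub>R mat 1) *v y"
    have "F lam = 2 * (w \<bullet> y) - w \<bullet> ((S + lam *\<^sub>R mat 1) *v w)"
      using solves[OF \<open>0 < lam\<close>] unfolding F_def w_def[symmetric] by (simp add: inner_commute)
    also have "\<dots> \<le> 2 * (w \<bullet> y) - w \<bullet> (S *v w)"
      using \<open>0 < lam\<close> unfolding inner_regularized_mult_vec by simp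
    finally show "ereal (F lam) \<le> (SUP v. ereal (2 * (v \<bullet> y) - v \<bullet> (S *v v)))"
      by (intro SUP_upper2[of w]) simp_all
  qed simp
  then show ?thesis
    unfolding inv_normsq_def F_def by (intro tendsto_Lim) simp_all
qed

lemma inv_normsq_zero:
  assumes "psd_sym S"
  shows "inv_normsq S 0 = 0"
  using assms unfolding inv_normsq_eq_SUP[OF assms] psd_sym_def
  by (intro antisym SUP_least) (auto intro: SUP_upper2[of 0])

lemma inv_normsq_diff_le:
  assumes "psd_sym S"
  shows "inv_normsq S (a - b) \<le> 2 * inv_normsq S a + 2 * inv_normsq S b"
  unfolding inv_normsq_eq_SUP[OF assms]
proof (rule SUP_least)
  fix v :: "real^'a"
  let ?g = "\<lambda>y v. 2 * (v \<bullet> y) - v \<bullet> (S *v v)"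
  have "?g (a - b) v = 2 * ?g a ((1/2) *\<^sub>R v) + 2 * ?g b ((- (1/2)) *\<^sub>R v)"
    by (simp add: matrix_vector_mult_scaleR linear_neg inner_diff_right algebra_simps)
  then have "ereal (?g (a - b) v) = 2 * ereal (?g a ((1/2) *\<^sub>R v)) + 2 * ereal (?g b ((- (1/2)) *\<^sub>R v))"
    by simp
  also have "\<dots> \<le> 2 * (SUP v. ereal (?g a v)) + 2 * (SUP v. ereal (?g b v))"
    by (intro add_mono ereal_mult_left_mono SUP_upper) simp_all
  finally show "ereal (?g (a - b) v) \<le> 2 * (SUP v. ereal (?g a v)) + 2 * (SUP v. ereal (?g b v))" .
qed

lemma inv_normsq_le_scaled:
  assumes S: "psd_sym S" and T: "psd_sym T" and c: "0 < c"
    and le: "\<And>v. c * (v \<bullet> (T *v v)) \<le> v \<bullet> (S *v v)"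
  shows "inv_normsq S y \<le> ereal (1/c) * inv_normsq T y"
  unfolding inv_normsq_eq_SUP[OF S] inv_normsq_eq_SUP[OF T]
proof (rule SUP_least)
  fix v :: "real^'a"
  have "2 * (v \<bullet> y) - v \<bullet> (S *v v) \<le> (1/c) * (2 * ((c *\<^sub>R v) \<bullet> y) - (c *\<^sub>R v) \<bullet> (T *v (c *\<^sub>R v)))"
    using c le[of v] by (simp add: matrix_vector_mult_scaleR field_simps)
  then have "ereal (2 * (v \<bullet> y) - v \<bullet> (S *v v))
      \<le> ereal (1/c) * ereal (2 * ((c *\<^sub>R v) \<bullet> y) - (c *\<^sub>R v) \<bullet> (T *v (c *\<^sub>R v)))"
    by simp
  also have "\<dots> \<le> ereal (1/c) * (SUP v. ereal (2 * (v \<bullet> y) - v \<bullet> (T *v v)))"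
    using c by (intro ereal_mult_left_mono SUP_upper) simp_all
  finally show "ereal (2 * (v \<bullet> y) - v \<bullet> (S *v v)) \<le> ereal (1/c) * (SUP v. ereal (2 * (v \<bullet> y) - v \<bullet> (T *v v)))" .
qed

lemma maxnn_nonneg: "0 \<le> maxnn S"
  unfolding maxnn_def by (rule Sup_upper) simp

lemma maxnn_upper: "a \<in> S \<Longrightarrow> a \<le> maxnn S"
  unfolding maxnn_def by (rule Sup_upper) simp

lemma maxnn_least: "0 \<le> b \<Longrightarrow> (\<And>a. a \<in> S \<Longrightarrow> a \<le> b) \<Longrightarrow> maxnn S \<le> b"
  unfolding maxnn_def by (rule Sup_least) auto

lemma inv_normsq_diameter_le:
  assumes S: "psd_sym S" and B: "0 \<le> B" and bound: "\<And>z. z \<in> A \<Longrightarrow> inv_normsq S (zs - z) \<le> B"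
  shows "maxnn ((\<lambda>(u, u'). inv_normsq S (u - u')) ` (A \<times> A)) \<le> 4 * B"
proof (rule maxnn_least)
  show "0 \<le> 4 * B" using B by simp
next
  fix a assume "a \<in> (\<lambda>(u, u'). inv_normsq S (u - u')) ` (A \<times> A)"
  then obtain u u' where "u \<in> A" "u' \<in> A" and a: "a = inv_normsq S ((zs - u') - (zs - u))"
    by auto
  have "a \<le> 2 * inv_normsq S (zs - u') + 2 * inv_normsq S (zs - u)"
    unfolding a by (rule inv_normsq_diff_le[OF S])
  also have "\<dots> \<le> 2 * B + 2 * B"
    using \<open>u \<in> A\<close> \<open>u' \<in> A\<close> by (intro add_mono ereal_mult_left_mono bound) simp_all
  also have "\<dots> = 4 * B"
    using B by (cases B) simp_all
  finally show "a \<le> 4 * B" .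
qed

lemma inner_Sigma_m1_mult_vec:
  "v \<bullet> (Sigma_m1 K x p *v v) = (\<Sum>i\<in>{1..K}. p i * (x i \<bullet> v - x 1 \<bullet> v)\<^sup>2)"
  unfolding Sigma_m1_def
  by (simp add: inner_outer_sum_mult_vec power2_eq_square inner_diff_left mult.assoc)

lemma inner_Sigma_cov_mult_vec:
  "v \<bullet> (Sigma_cov K x p *v v) = (\<Sum>i\<in>{1..K}. p i * (x i \<bullet> v - xbar K x p \<bullet> v)\<^sup>2)"
  unfolding Sigma_cov_def
  by (simp add: inner_outer_sum_mult_vec power2_eq_square inner_diff_left mult.assoc)

lemma psd_sym_Sigma_m1: "\<forall>i\<in>{1..K}. 0 \<le> p i \<Longrightarrow> psd_sym (Sigma_m1 K x p)"
  unfolding Sigma_m1_def by (rule psd_sym_outer_sum) simp_all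

lemma psd_sym_Sigma_cov: "\<forall>i\<in>{1..K}. 0 \<le> p i \<Longrightarrow> psd_sym (Sigma_cov K x p)"
  unfolding Sigma_cov_def by (rule psd_sym_outer_sum) simp_all

definition tau_lin_obj :: "nat \<Rightarrow> (nat \<Rightarrow> real^'d) \<Rightarrow> (real^'d) set \<Rightarrow> real^'d \<Rightarrow> real^'d
    \<Rightarrow> (nat \<Rightarrow> real) \<Rightarrow> ereal" where
  "tau_lin_obj K x Z zs th p =
     maxnn ((\<lambda>z. inv_normsq (Sigma_m1 K x p) (zs - z) / ereal (((zs - z) \<bullet> th)\<^sup>2)) ` (Z - {zs}))"

lemma tau_lin_eq_INF: "tau_lin K x Z zs th = (INF p\<in>prob_simplex K. tau_lin_obj K x Z zs th p)"
  unfolding tau_lin_def tau_lin_obj_def ..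

lemma inv_normsq_le_gap_tau_lin_obj:
  assumes "z \<in> Z - {zs}" and "0 < (zs - z) \<bullet> th"
  shows "inv_normsq (Sigma_m1 K x p) (zs - z) \<le> ereal (((zs - z) \<bullet> th)\<^sup>2) * tau_lin_obj K x Z zs th p"
proof -
  have "inv_normsq (Sigma_m1 K x p) (zs - z) / ereal (((zs - z) \<bullet> th)\<^sup>2) \<le> tau_lin_obj K x Z zs th p"
    unfolding tau_lin_obj_def using assms(1) by (intro maxnn_upper) blast
  then show ?thesis
    using ereal_divide_le_pos assms(2) by simp
qed

lemma V_lin_obj_le_tau_lin_obj:
  assumes p: "\<forall>i\<in>{1..K}. 0 \<le> p i"
    and zs_max: "\<forall>z\<in>Z. z \<noteq> zs \<longrightarrow> z \<bullet> th < zs \<bullet> th"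
    and AZ: "A \<subseteq> Z" and gap: "\<forall>z\<in>A - {zs}. (zs - z) \<bullet> th \<le> 4 * eps"
  shows "V_lin_obj K x A p \<le> ereal (64 * eps\<^sup>2) * tau_lin_obj K x Z zs th p"
proof -
  let ?S = "Sigma_m1 K x p" and ?t = "tau_lin_obj K x Z zs th p"
  have S: "psd_sym ?S" using p by (rule psd_sym_Sigma_m1)
  have t: "0 \<le> ?t" unfolding tau_lin_obj_def by (rule maxnn_nonneg)
  have "inv_normsq ?S (zs - z) \<le> ereal (16 * eps\<^sup>2) * ?t" if "z \<in> A" for z
  proof (cases "z = zs")
    case True
    then show ?thesis using inv_normsq_zero[OF S] t by simp
  next
    case False
    let ?D = "(zs - z) \<bullet> th"
    have D: "0 < ?D" "?D \<le> 4 * eps"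
      using zs_max gap \<open>z \<in> A\<close> AZ False by (auto simp: inner_diff_left)
    have "inv_normsq ?S (zs - z) \<le> ereal (?D\<^sup>2) * ?t"
      using \<open>z \<in> A\<close> AZ False D(1) by (intro inv_normsq_le_gap_tau_lin_obj) auto
    also have "\<dots> \<le> ereal (16 * eps\<^sup>2) * ?t"
    proof (rule ereal_mult_right_mono[OF _ t])
      have "?D\<^sup>2 \<le> (4 * eps)\<^sup>2" using D by (intro power_mono) simp_all
      then show "ereal (?D\<^sup>2) \<le> ereal (16 * eps\<^sup>2)" by (simp add: power_mult_distrib)
    qed
    finally show ?thesis .
  qed
  then have "V_lin_obj K x A p \<le> 4 * (ereal (16 * eps\<^sup>2) * ?t)"
    unfolding V_lin_obj_def using t by (intro inv_normsq_diameter_le[OF S]) simp_all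
  then show ?thesis by (simp add: mult.assoc[symmetric])
qed

lemma V_lin_le_tau_lin:
  assumes eps: "0 < eps"
    and zs_max: "\<forall>z\<in>Z. z \<noteq> zs \<longrightarrow> z \<bullet> th < zs \<bullet> th"
    and AZ: "A \<subseteq> Z" and gap: "\<forall>z\<in>A - {zs}. (zs - z) \<bullet> th \<le> 4 * eps"
  shows "V_lin K x A \<le> 64 * tau_lin K x Z zs th * ereal (eps\<^sup>2)"
proof -
  have c: "0 < ereal (64 * eps\<^sup>2)" "ereal (64 * eps\<^sup>2) \<noteq> \<infinity>" using eps by simp_all
  have "V_lin K x A / ereal (64 * eps\<^sup>2) \<le> tau_lin K x Z zs th"
    unfolding tau_lin_eq_INF
  proof (rule INF_greatest)
    fix p assume p: "p \<in> prob_simplex K"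
    have "V_lin K x A \<le> V_lin_obj K x A p"
      unfolding V_lin_def using p by (rule INF_lower)
    also have "\<dots> \<le> ereal (64 * eps\<^sup>2) * tau_lin_obj K x Z zs th p"
      using p zs_max AZ gap by (intro V_lin_obj_le_tau_lin_obj) (auto simp: prob_simplex_def)
    finally show "V_lin K x A / ereal (64 * eps\<^sup>2) \<le> tau_lin_obj K x Z zs th p"
      using ereal_divide_le_pos[OF c] by blast
  qed
  then have "V_lin K x A \<le> ereal (64 * eps\<^sup>2) * tau_lin K x Z zs th"
    using ereal_divide_le_pos[OF c] by blast
  then show ?thesis by (simp add: mult_ac)
qed

lemma weighted_sq_dev_le:
  fixes a :: "'i \<Rightarrow> real"
  assumes w: "\<forall>i\<in>I. 0 \<le> w i" and sum_w: "sum w I = 1"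
  shows "(\<Sum>i\<in>I. w i * (a i - a j)\<^sup>2) \<le> 2 * (\<Sum>i\<in>I. w i * (a i - b)\<^sup>2) + 2 * (a j - b)\<^sup>2"
proof -
  have "(\<Sum>i\<in>I. w i * (a i - a j)\<^sup>2) \<le> (\<Sum>i\<in>I. w i * (2 * (a i - b)\<^sup>2 + 2 * (a j - b)\<^sup>2))"
  proof (rule sum_mono)
    fix i assume "i \<in> I"
    have "(a i - a j)\<^sup>2 = 2 * (a i - b)\<^sup>2 + 2 * (a j - b)\<^sup>2 - (a i + a j - 2 * b)\<^sup>2"
      by (simp add: power2_eq_square algebra_simps)
    then have "(a i - a j)\<^sup>2 \<le> 2 * (a i - b)\<^sup>2 + 2 * (a j - b)\<^sup>2" by simp
    then show "w i * (a i - a j)\<^sup>2 \<le> w i * (2 * (a i - b)\<^sup>2 + 2 * (a j - b)\<^sup>2)"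
      using w \<open>i \<in> I\<close> by (simp add: mult_left_mono)
  qed
  also have "\<dots> = 2 * (\<Sum>i\<in>I. w i * (a i - b)\<^sup>2) + 2 * (a j - b)\<^sup>2 * sum w I"
    by (simp add: algebra_simps sum.distrib sum_distrib_left sum_distrib_right)
  finally show ?thesis using sum_w by simp
qed

lemma sum_p_xor:
  assumes "finite I" "1 \<in> I" "pt 1 = 0"
  shows "(\<Sum>i\<in>I. p_xor pt i * f i) = ((\<Sum>i\<in>I. pt i * f i) + f 1) / 2"
proof -
  have "(\<Sum>i\<in>I. p_xor pt i * f i) = (\<Sum>i\<in>I. pt i * f i / 2 + (if i = 1 then f 1 / 2 else 0))"
    using assms(3) by (intro sum.cong) (auto simp: p_xor_def)
  also have "\<dots> = (\<Sum>i\<in>I. pt i * f i) / 2 + f 1 / 2"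
    using assms(1,2) by (simp add: sum.distrib sum_divide_distrib)
  finally show ?thesis by simp
qed

text \<open>Only the mass \<open>1/2\<close> of \<open>p_xor\<close> on the anchor \<open>x 1\<close> matters: the bound holds with any
  centre in place of \<open>xbar\<close>.\<close>
lemma Sigma_m1_le_Sigma_cov:
  assumes K: "1 \<le> K" and pt: "pt \<in> prob_simplex K" and pt1: "pt 1 = 0"
    and q: "\<forall>i\<in>{1..K}. 0 \<le> q i"
  defines "p \<equiv> \<lambda>i. (p_xor pt i + q i) / 2"
  shows "v \<bullet> (Sigma_m1 K x pt *v v) \<le> 8 * (v \<bullet> (Sigma_cov K x p *v v))"
proof -
  define X where "X i = (x i \<bullet> v - xbar K x p \<bullet> v)\<^sup>2" for i
  have "v \<bullet> (Sigma_m1 K x pt *v v) = (\<Sum>i\<in>{1..K}. pt i * (x i \<bullet> v - x 1 \<bullet> v)\<^sup>2)"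
    by (rule inner_Sigma_m1_mult_vec)
  also have "\<dots> \<le> 2 * (\<Sum>i\<in>{1..K}. pt i * X i) + 2 * X 1"
    unfolding X_def using pt by (intro weighted_sq_dev_le) (auto simp: prob_simplex_def)
  also have "\<dots> = 4 * (\<Sum>i\<in>{1..K}. p_xor pt i * X i)"
    using K pt1 by (simp add: sum_p_xor)
  also have "\<dots> \<le> 4 * (\<Sum>i\<in>{1..K}. (p_xor pt i + q i) * X i)"
    using q unfolding X_def by (intro mult_left_mono sum_mono mult_right_mono) auto
  also have "\<dots> = 8 * (\<Sum>i\<in>{1..K}. p i * X i)"
    unfolding p_def sum_distrib_left by (intro sum.cong) (simp_all add: field_simps)
  also have "\<dots> = 8 * (v \<bullet> (Sigma_cov K x p *v v))"
    unfolding X_def inner_Sigma_cov_mult_vec ..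
  finally show ?thesis .
qed

lemma V_cov_le_V_lin_obj:
  assumes K: "1 \<le> K" and pt: "pt \<in> prob_simplex K" and pt1: "pt 1 = 0"
    and q: "\<forall>i\<in>{1..K}. 0 \<le> q i"
  shows "V_cov K x A (\<lambda>i. (p_xor pt i + q i) / 2) \<le> 8 * V_lin_obj K x A pt"
proof -
  let ?p = "\<lambda>i. (p_xor pt i + q i) / 2"
  let ?Sc = "Sigma_cov K x ?p" and ?Sm = "Sigma_m1 K x pt"
  have pt_nonneg: "\<forall>i\<in>{1..K}. 0 \<le> pt i" using pt by (simp add: prob_simplex_def)
  have Sc: "psd_sym ?Sc"
    using pt_nonneg q by (intro psd_sym_Sigma_cov) (simp add: p_xor_def)
  have Sm: "psd_sym ?Sm" using pt_nonneg by (rule psd_sym_Sigma_m1)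
  show ?thesis
    unfolding V_cov_def
  proof (rule maxnn_least)
    show "0 \<le> 8 * V_lin_obj K x A pt"
      unfolding V_lin_obj_def by (simp add: maxnn_nonneg)
  next
    fix a assume "a \<in> (\<lambda>(u, u'). inv_normsq ?Sc (u - u')) ` (A \<times> A)"
    then obtain u u' where "u \<in> A" "u' \<in> A" and a: "a = inv_normsq ?Sc (u - u')" by auto
    have "a \<le> ereal (1 / (1/8)) * inv_normsq ?Sm (u - u')"
      unfolding a using Sigma_m1_le_Sigma_cov[OF K pt pt1 q, where x = x]
      by (intro inv_normsq_le_scaled[OF Sc Sm]) (simp_all add: mult.commute)
    also have "\<dots> = 8 * inv_normsq ?Sm (u - u')" by simp
    also have "\<dots> \<le> 8 * V_lin_obj K x A pt"
      unfolding V_lin_obj_def using \<open>u \<in> A\<close> \<open>u' \<in> A\<close>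
      by (intro ereal_mult_left_mono maxnn_upper) auto
    finally show "a \<le> 8 * V_lin_obj K x A pt" .
  qed
qed

theorem mainTheorem7:
  fixes K :: nat and x :: "nat \<Rightarrow> real^'d" and Z A :: "(real^'d) set"
    and th zs :: "real^'d" and eps :: real
  assumes K: "1 \<le> K"
    and Zfin: "finite Z"
    and zsZ: "zs \<in> Z"
    and zs_max: "\<forall>z\<in>Z. z \<noteq> zs \<longrightarrow> z \<bullet> th < zs \<bullet> th"
    and eps: "0 < eps"
    and AZ: "A \<subseteq> Z" and zsA: "zs \<in> A"
    and gap: "\<forall>z\<in>A - {zs}. (zs - z) \<bullet> th \<le> 4 * eps"
  shows "V_lin K x A \<le> 64 * tau_lin K x Z zs th * ereal (eps\<^sup>2)
         \<and> (\<forall>pt q. pt \<in> prob_simplex K \<and> pt 1 = 0 \<and> V_lin_obj K x A pt = V_lin K x A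
                   \<and> q \<in> prob_simplex K
              \<longrightarrow> V_cov K x A (\<lambda>i. (p_xor pt i + q i) / 2)
                    \<le> 512 * tau_lin K x Z zs th * ereal (eps\<^sup>2))"
proof (intro conjI allI impI)
  show V_lin_le: "V_lin K x A \<le> 64 * tau_lin K x Z zs th * ereal (eps\<^sup>2)"
    using eps zs_max AZ gap by (rule V_lin_le_tau_lin)
  fix pt q
  assume hyps: "pt \<in> prob_simplex K \<and> pt 1 = 0 \<and> V_lin_obj K x A pt = V_lin K x A
    \<and> q \<in> prob_simplex K"
  then have pt: "pt \<in> prob_simplex K" "pt 1 = 0" and opt: "V_lin_obj K x A pt = V_lin K x A"
    by simp_all
  have q: "\<forall>i\<in>{1..K}. 0 \<le> q i" using hyps by (simp add: prob_simplex_def)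
  have "V_cov K x A (\<lambda>i. (p_xor pt i + q i) / 2) \<le> 8 * V_lin K x A"
    using V_cov_le_V_lin_obj[OF K pt q, where x = x and A = A] opt by simp
  also have "\<dots> \<le> 8 * (64 * tau_lin K x Z zs th * ereal (eps\<^sup>2))"
    using V_lin_le by (rule ereal_mult_left_mono) simp
  also have "\<dots> = 512 * tau_lin K x Z zs th * ereal (eps\<^sup>2)"
    unfolding mult.assoc[symmetric] by simp
  finally show "V_cov K x A (\<lambda>i. (p_xor pt i + q i) / 2) \<le> 512 * tau_lin K x Z zs th * ereal (eps\<^sup>2)" .
qed

end
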